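(* Take $T=N$, fix $z\in\mathbb C\setminus\mathbb R$, $k$ and $\epsilon\in(0,\tau)$. Suppose that along some subsequence of $N$ the complex measures $\mathbb E[L^{1,z}_N]$ converge weakly to $K_z(x)\,dx$ for some bounded measurable $K_z:[0,1]\to\mathbb C$. Then, along this subsequence, $$\sum_{t=1}^N M^k_\epsilon(I^t_N)\,\mathbb E[G_N(z)_{tt}]\longrightarrow\int_0^1K_z(x)\,M^k_\epsilon(dx)\quad\text{in probability.}$$
   Context: Lognormal MRM: fix $\tau>0$, $\gamma^2\in[0,2)$; let $\mu$ be a Gaussian independently scattered random measure on $S=\mathbb R\times(0,\infty)$ with control measure $\theta(dt,dy)=y^{-2}dtdy$ (independent values on disjoint sets, $\mu(A)\sim\mathcal N(-\frac{\gamma^2}2\theta(A),\gamma^2\theta(A))$), $A_\epsilon(t)=\{(s,y):y\ge\epsilon,|s-t|\le\min(y,\tau)/2\}$, $\omega_\epsilon(t)=\mu(A_\epsilon(t))$, $M_\epsilon(dt)=e^{\omega_\epsilon(t)}dt$, $M$ the a.s. weak limit of $M_\epsilon$. $(M^k,M^k_\epsilon)$ are i.i.d. copies of $(M,M_\epsilon)$. Finite-$N$ setting ($T=N$): $(B^i)$ i.i.d. standard Brownian motions independent of the $M^i$; $X_N(k,t)=B^k(M^k[0,t/N])-B^k(M^k[0,(t-1)/N])$; $G_N(z)=\begin{pmatrix}zI_N&-X_N^t\\-X_N&zI_N\end{pmatrix}^{-1}$; $L^{1,z}_N$ is the complex measure $L^{1,z}_N(f)=\frac1N\sum_{t=1}^Nf(t/N)G_N(z)_{tt}$;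 $I^t_N=[(t-1)/N,t/N]$. *)

theory Defs
  imports "HOL-Probability.Probability"
begin

definition S_set :: "(real \<times> real) set" where
  "S_set = {p. snd p > 0}"

definition theta :: "(real \<times> real) measure" where
  "theta = density lborel (\<lambda>p. indicator S_set p * ennreal (1 / (snd p)^2))"

definition adm :: "(real \<times> real) set set" where
  "adm = {A. A \<in> sets lborel \<and> A \<subseteq> S_set \<and> emeasure theta A < \<infinity>}"

definition gauss_law :: "real \<Rightarrow> real \<Rightarrow> real measure" where
  "gauss_law m v = (if v = 0 then return borel m
      else density lborel (\<lambda>x. ennreal (normal_density m (sqrt v) x)))"

definition gaussian_scattered ::
  "'a measure \<Rightarrow> real \<Rightarrow> ((real \<times> real) set \<Rightarrow> 'a \<Rightarrow> real) \<Rightarrow> bool" where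
  "gaussian_scattered P g2 mu \<longleftrightarrow>
     (\<forall>A\<in>adm. mu A \<in> borel_measurable P \<and>
        distr P borel (mu A) = gauss_law (- (g2 / 2) * measure theta A) (g2 * measure theta A)) \<and>
     (\<forall>F. finite F \<longrightarrow> F \<subseteq> adm \<longrightarrow> disjoint F \<longrightarrow>
        prob_space.indep_vars P (\<lambda>_. borel) mu F) \<and>
     (\<forall>A\<in>adm. \<forall>B\<in>adm. A \<inter> B = {} \<longrightarrow> (AE \<omega> in P. mu (A \<union> B) \<omega> = mu A \<omega> + mu B \<omega>))"

definition A_eps :: "real \<Rightarrow> real \<Rightarrow> real \<Rightarrow> (real \<times> real) set" where
  "A_eps tau eps t = {(s, y). y \<ge> eps \<and> \<bar>s - t\<bar> \<le> min y tau / 2}"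

definition std_BM :: "'a measure \<Rightarrow> (real \<Rightarrow> 'a \<Rightarrow> real) \<Rightarrow> bool" where
  "std_BM P X \<longleftrightarrow>
     (\<forall>\<omega>\<in>space P. X 0 \<omega> = 0 \<and> continuous_on {0..} (\<lambda>t. X t \<omega>)) \<and>
     (\<forall>t\<ge>0. X t \<in> borel_measurable P) \<and>
     (\<forall>s t. 0 \<le> s \<longrightarrow> s < t \<longrightarrow> distr P borel (\<lambda>\<omega>. X t \<omega> - X s \<omega>) = gauss_law 0 (t - s)) \<and>
     (\<forall>(ts :: nat \<Rightarrow> real) n. (\<forall>i<n. 0 \<le> ts i \<and> ts i < ts (Suc i)) \<longrightarrow>
        prob_space.indep_vars P (\<lambda>_. borel) (\<lambda>i \<omega>. X (ts (Suc i)) \<omega> - X (ts i) \<omega>) {..<n})"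

definition gen_sigma :: "'a measure \<Rightarrow> ('i \<Rightarrow> 'a \<Rightarrow> real) \<Rightarrow> 'i set \<Rightarrow> 'a set set" where
  "gen_sigma P X I = sigma_sets (space P) (\<Union>i\<in>I. {X i -` C \<inter> space P | C. C \<in> sets borel})"

definition Meps :: "(real \<Rightarrow> 'a \<Rightarrow> real) \<Rightarrow> 'a \<Rightarrow> real measure" where
  "Meps w \<omega> = density lborel (\<lambda>t. ennreal (exp (w t \<omega>)))"

definition vague_conv :: "(real \<Rightarrow> real measure) \<Rightarrow> real measure \<Rightarrow> bool" where
  "vague_conv Mf M \<longleftrightarrow>
     (\<forall>f :: real \<Rightarrow> real. continuous_on UNIV f \<longrightarrow> (\<exists>a b. \<forall>x. x \<notin> {a..b} \<longrightarrow> f x = 0) \<longrightarrow>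
        ((\<lambda>e. integral\<^sup>L (Mf e) f) \<longlongrightarrow> integral\<^sup>L M f) (at_right 0))"

text \<open>X_N(k,t) for 1 <= k,t <= N (T = N).\<close>
definition Xentry :: "(nat \<Rightarrow> real \<Rightarrow> 'a \<Rightarrow> real) \<Rightarrow> (nat \<Rightarrow> 'a \<Rightarrow> real measure) \<Rightarrow> nat \<Rightarrow> nat \<Rightarrow> nat \<Rightarrow> 'a \<Rightarrow> real" where
  "Xentry B M N k t \<omega> = B k (measure (M k \<omega>) {0 .. real t / real N}) \<omega>
                      - B k (measure (M k \<omega>) {0 .. (real t - 1) / real N}) \<omega>"

text \<open>The 2N x 2N matrix [[zI, -X^t], [-X, zI]], 0-based indices; X given with 1-based indices.\<close>
definition Hmat :: "nat \<Rightarrow> (nat \<Rightarrow> nat \<Rightarrow> real) \<Rightarrow> complex \<Rightarrow> nat \<Rightarrow> nat \<Rightarrow> complex" where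
  "Hmat N X z i j =
     (if i < N \<and> j < N then (if i = j then z else 0)
      else if i < N then - complex_of_real (X (j - N + 1) (i + 1))
      else if j < N then - complex_of_real (X (i - N + 1) (j + 1))
      else (if i = j then z else 0))"

definition mat_inv :: "nat \<Rightarrow> (nat \<Rightarrow> nat \<Rightarrow> complex) \<Rightarrow> nat \<Rightarrow> nat \<Rightarrow> complex" where
  "mat_inv n A = (THE G. (\<forall>i<n. \<forall>j<n. (\<Sum>l<n. A i l * G l j) = (if i = j then 1 else 0)) \<and>
                         (\<forall>i<n. \<forall>j<n. (\<Sum>l<n. G i l * A l j) = (if i = j then 1 else 0)) \<and>
                         (\<forall>i j. \<not> (i < n \<and> j < n) \<longrightarrow> G i j = 0))"

definition Gdiag :: "(nat \<Rightarrow> real \<Rightarrow> 'a \<Rightarrow> real) \<Rightarrow> (nat \<Rightarrow> 'a \<Rightarrow> real measure) \<Rightarrow> nat \<Rightarrow> complex \<Rightarrow> nat \<Rightarrow> 'a \<Rightarrow> complex" where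
  "Gdiag B M N z t \<omega> = mat_inv (2 * N) (Hmat N (\<lambda>k s. Xentry B M N k s \<omega>) z) (t - 1) (t - 1)"

definition conv_in_prob :: "'a measure \<Rightarrow> (nat \<Rightarrow> 'a \<Rightarrow> complex) \<Rightarrow> ('a \<Rightarrow> complex) \<Rightarrow> bool" where
  "conv_in_prob P Y Z \<longleftrightarrow>
     (\<forall>e > 0. ((\<lambda>n. measure P {\<omega> \<in> space P. dist (Y n \<omega>) (Z \<omega>) > e}) \<longlongrightarrow> 0) sequentially)"

end

theory Submission
  imports Defs "Jordan_Normal_Form.Determinant"
begin

(*
  The weights  c_N(t) = E[G_N(z)_tt]  are deterministic and bounded by 1/|Im z|,
  because G_N(z) is the inverse of  z I - R  with R real symmetric, and the diagonal entries of
  such a resolvent are bounded by 1/|Im z|.  For a fixed sample point the measure M^k_eps has a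
  continuous density w = exp(omega^k_eps), so  M^k_eps(I^t_N) = (1/N) w(t/N) + o(1/N)  uniformly
  in t by uniform continuity of w on [0,1].  Hence the random sum differs from the Riemann-type sum
  (1/N) sum_t w(t/N) c_N(t) by o(1); the latter converges to  int_0^1 w K dx = int K dM^k_eps  by
  the weak-convergence hypothesis applied to the continuous test function w.  The convergence is
  therefore pointwise on the sample space, which implies convergence in probability.

  Only the continuity of the paths of omega^k_eps, the bound on E[G_N(z)_tt] and the hypothesis on
  the limit K are used.
*)

definition two_sided_inverse ::
  "nat \<Rightarrow> (nat \<Rightarrow> nat \<Rightarrow> 'a::comm_ring_1) \<Rightarrow> (nat \<Rightarrow> nat \<Rightarrow> 'a) \<Rightarrow> bool" where
  "two_sided_inverse n A G \<longleftrightarrow>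
     (\<forall>i<n. \<forall>j<n. (\<Sum>l<n. A i l * G l j) = (if i = j then 1 else 0)) \<and>
     (\<forall>i<n. \<forall>j<n. (\<Sum>l<n. G i l * A l j) = (if i = j then 1 else 0)) \<and>
     (\<forall>i j. \<not> (i < n \<and> j < n) \<longrightarrow> G i j = 0)"

text \<open>Two-sided inverses are unique:  G = G (A G') = (G A) G' = G'.\<close>
lemma two_sided_inverse_unique:
  assumes G: "two_sided_inverse n A G" and G': "two_sided_inverse n A G'"
  shows "G = G'"
proof (intro ext)
  fix i j
  show "G i j = G' i j"
  proof (cases "i < n \<and> j < n")
    case False
    then show ?thesis using G G' by (auto simp: two_sided_inverse_def)
  next
    case True
    have "G i j = (\<Sum>l<n. if l = j then G i l else 0)"
      using True by simp
    also have "\<dots> = (\<Sum>l<n. G i l * (if l = j then 1 else 0))"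
      by (intro sum.cong) auto
    also have "\<dots> = (\<Sum>l<n. G i l * (\<Sum>m<n. A l m * G' m j))"
      using G' True by (intro sum.cong) (auto simp: two_sided_inverse_def)
    also have "\<dots> = (\<Sum>l<n. \<Sum>m<n. G i l * A l m * G' m j)"
      by (simp add: sum_distrib_left mult.assoc)
    also have "\<dots> = (\<Sum>m<n. \<Sum>l<n. G i l * A l m * G' m j)"
      by (rule sum.swap)
    also have "\<dots> = (\<Sum>m<n. (\<Sum>l<n. G i l * A l m) * G' m j)"
      by (simp add: sum_distrib_right)
    also have "\<dots> = (\<Sum>m<n. (if i = m then 1 else 0) * G' m j)"
      using G True by (intro sum.cong) (auto simp: two_sided_inverse_def)
    also have "\<dots> = (\<Sum>m<n. if m = i then G' m j else 0)"
      by (intro sum.cong) auto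
    also have "\<dots> = G' i j"
      using True by simp
    finally show ?thesis .
  qed
qed

lemma mat_inv_eq:
  assumes "two_sided_inverse n A G"
  shows "mat_inv n A = G"
  unfolding mat_inv_def two_sided_inverse_def[symmetric]
  using assms two_sided_inverse_unique by blast

lemma two_sided_inverse_exists:
  fixes A :: "nat \<Rightarrow> nat \<Rightarrow> 'a::field"
  assumes inj: "\<And>v. \<forall>i<n. (\<Sum>l<n. A i l * v l) = 0 \<Longrightarrow> \<forall>i<n. v i = 0"
  shows "\<exists>G. two_sided_inverse n A G"
proof -
  define Am where "Am = mat n n (\<lambda>(i,j). A i j)"
  have Am: "Am \<in> carrier_mat n n" unfolding Am_def by simp
  have entry: "(Am *\<^sub>v v) $ i = (\<Sum>l<n. A i l * v $ l)" if "i < n" "v \<in> carrier_vec n" for i v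
    using that unfolding Am_def by (simp add: scalar_prod_def lessThan_atLeast0)
  have "det Am \<noteq> 0"
  proof
    assume "det Am = 0"
    then obtain v where v: "v \<in> carrier_vec n" "v \<noteq> 0\<^sub>v n" "Am *\<^sub>v v = 0\<^sub>v n"
      using det_0_iff_vec_prod_zero[OF Am] by auto
    have "\<forall>i<n. (\<Sum>l<n. A i l * v $ l) = 0"
      using v entry by (metis index_zero_vec(1))
    from inj[OF this] have "v = 0\<^sub>v n" using v(1) by (intro eq_vecI) auto
    with v(2) show False by contradiction
  qed
  from det_non_zero_imp_unit[OF Am this, of "()"]
  obtain Bm where Bm: "Bm \<in> carrier_mat n n" "Bm * Am = 1\<^sub>m n" "Am * Bm = 1\<^sub>m n"
    unfolding Units_def ring_mat_def using Am by auto
  define G where "G i j = (if i < n \<and> j < n then Bm $$ (i,j) else 0)" for i j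
  have "(Am * Bm) $$ (i,j) = (\<Sum>l<n. A i l * G l j)"
   and "(Bm * Am) $$ (i,j) = (\<Sum>l<n. G i l * A l j)" if "i < n" "j < n" for i j
    using that Bm(1) unfolding Am_def G_def by (simp_all add: scalar_prod_def lessThan_atLeast0)
  then have "two_sided_inverse n A G"
    using Bm by (auto simp: two_sided_inverse_def G_def)
  then show ?thesis by blast
qed

text \<open>For  A = z I - R  with R Hermitian, the quadratic form  v* A v  has imaginary part
  Im z |v|^2, since  v* R v  is real.\<close>
lemma shifted_hermitian_form_Im:
  fixes R :: "nat \<Rightarrow> nat \<Rightarrow> complex" and v :: "nat \<Rightarrow> complex"
  assumes herm: "\<And>i j. i < n \<Longrightarrow> j < n \<Longrightarrow> cnj (R i j) = R j i"
    and A: "\<And>i j. i < n \<Longrightarrow> j < n \<Longrightarrow> A i j = (if i = j then z else 0) - R i j"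
  shows "Im (\<Sum>i<n. cnj (v i) * (\<Sum>l<n. A i l * v l)) = Im z * (\<Sum>i<n. (cmod (v i))^2)"
proof -
  define S where "S = (\<Sum>i<n. \<Sum>l<n. cnj (v i) * R i l * v l)"
  have row: "cnj (v i) * (\<Sum>l<n. A i l * v l) = z * (cnj (v i) * v i) - (\<Sum>l<n. cnj (v i) * R i l * v l)"
    if "i < n" for i
  proof -
    have "(\<Sum>l<n. A i l * v l) = (\<Sum>l<n. (if i = l then z * v l else 0) - R i l * v l)"
      using that by (intro sum.cong) (auto simp: A algebra_simps)
    also have "\<dots> = z * v i - (\<Sum>l<n. R i l * v l)"
      using that by (simp add: sum_subtractf)
    finally show ?thesis
      by (simp add: right_diff_distrib sum_distrib_left mult_ac)
  qed
  have "(\<Sum>i<n. cnj (v i) * (\<Sum>l<n. A i l * v l))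
        = (\<Sum>i<n. z * (cnj (v i) * v i) - (\<Sum>l<n. cnj (v i) * R i l * v l))"
    by (rule sum.cong) (simp_all add: row)
  also have "\<dots> = z * (\<Sum>i<n. cnj (v i) * v i) - S"
    by (simp add: S_def sum_subtractf sum_distrib_left)
  finally have quad: "(\<Sum>i<n. cnj (v i) * (\<Sum>l<n. A i l * v l)) = z * (\<Sum>i<n. cnj (v i) * v i) - S" .
  have "cnj S = (\<Sum>i<n. \<Sum>l<n. cnj (v l) * R l i * v i)"
    unfolding S_def cnj_sum complex_cnj_mult complex_cnj_cnj
    by (intro sum.cong refl) (simp add: herm mult_ac)
  also have "\<dots> = S"
    unfolding S_def by (rule sum.swap)
  finally have "Im S = 0"
    by (metis cnj.sel(2) neg_equal_zero)
  moreover have "(\<Sum>i<n. cnj (v i) * v i) = of_real (\<Sum>i<n. (cmod (v i))^2)"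
    unfolding of_real_sum of_real_power
    by (intro sum.cong refl) (simp only: of_real_power[symmetric] complex_norm_square mult.commute)
  ultimately show ?thesis
    using quad by simp
qed

lemma shifted_hermitian_injective:
  fixes R :: "nat \<Rightarrow> nat \<Rightarrow> complex" and v :: "nat \<Rightarrow> complex"
  assumes herm: "\<And>i j. i < n \<Longrightarrow> j < n \<Longrightarrow> cnj (R i j) = R j i"
    and A: "\<And>i j. i < n \<Longrightarrow> j < n \<Longrightarrow> A i j = (if i = j then z else 0) - R i j"
    and z: "Im z \<noteq> 0" and v: "\<forall>i<n. (\<Sum>l<n. A i l * v l) = 0"
  shows "\<forall>i<n. v i = 0"
proof -
  have "Im z * (\<Sum>i<n. (cmod (v i))^2) = 0"
    using shifted_hermitian_form_Im[where n = n and R = R and A = A and z = z and v = v, OF herm A] v by simp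
  with z have "(\<Sum>i<n. (cmod (v i))^2) = 0" by simp
  then show ?thesis by (simp add: sum_nonneg_eq_0_iff)
qed

text \<open>If  A v = e_p  then  Im z |v|^2 = -Im (v p),  so  |Im z| |v p|^2 <= |v p|,
  i.e. the p-th coordinate of the solution is at most 1/|Im z| in modulus.\<close>
lemma shifted_hermitian_solution_bound:
  fixes R :: "nat \<Rightarrow> nat \<Rightarrow> complex" and v :: "nat \<Rightarrow> complex"
  assumes herm: "\<And>i j. i < n \<Longrightarrow> j < n \<Longrightarrow> cnj (R i j) = R j i"
    and A: "\<And>i j. i < n \<Longrightarrow> j < n \<Longrightarrow> A i j = (if i = j then z else 0) - R i j"
    and z: "Im z \<noteq> 0" and p: "p < n"
    and v: "\<forall>i<n. (\<Sum>l<n. A i l * v l) = (if i = p then 1 else 0)"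
  shows "cmod (v p) \<le> 1 / \<bar>Im z\<bar>"
proof -
  define norm2 where "norm2 = (\<Sum>i<n. (cmod (v i))^2)"
  have "(\<Sum>i<n. cnj (v i) * (\<Sum>l<n. A i l * v l)) = (\<Sum>i<n. if i = p then cnj (v i) else 0)"
    using v by (intro sum.cong) auto
  also have "\<dots> = cnj (v p)" using p by simp
  finally have "Im z * norm2 = - Im (v p)"
    using shifted_hermitian_form_Im[where n = n and R = R and A = A and z = z and v = v, OF herm A]
    by (simp add: norm2_def)
  moreover have "0 \<le> norm2"
    unfolding norm2_def by (intro sum_nonneg) simp
  ultimately have "\<bar>Im z\<bar> * norm2 = \<bar>Im (v p)\<bar>"
    by (metis abs_minus_cancel abs_mult abs_of_nonneg)
  also have "\<dots> \<le> cmod (v p)" by (rule abs_Im_le_cmod)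
  finally have le: "\<bar>Im z\<bar> * norm2 \<le> cmod (v p)" .
  have "(cmod (v p))^2 \<le> norm2"
    unfolding norm2_def using p by (intro member_le_sum) auto
  then have "cmod (v p) * (\<bar>Im z\<bar> * cmod (v p)) \<le> cmod (v p) * 1"
    using le mult_left_mono[of "(cmod (v p))^2" norm2 "\<bar>Im z\<bar>"]
    by (simp add: power2_eq_square mult_ac)
  then have "cmod (v p) = 0 \<or> \<bar>Im z\<bar> * cmod (v p) \<le> 1"
    by (metis mult_le_cancel_left_pos norm_ge_zero order_le_less)
  then show ?thesis
    using z by (auto simp: pos_le_divide_eq mult.commute)
qed

lemma shifted_hermitian_mat_inv_diag_bound:
  fixes R :: "nat \<Rightarrow> nat \<Rightarrow> complex"
  assumes herm: "\<And>i j. i < n \<Longrightarrow> j < n \<Longrightarrow> cnj (R i j) = R j i"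
    and A: "\<And>i j. i < n \<Longrightarrow> j < n \<Longrightarrow> A i j = (if i = j then z else 0) - R i j"
    and z: "Im z \<noteq> 0" and p: "p < n"
  shows "cmod (mat_inv n A p p) \<le> 1 / \<bar>Im z\<bar>"
proof -
  obtain G where G: "two_sided_inverse n A G"
    using two_sided_inverse_exists shifted_hermitian_injective[OF herm A z] by blast
  have "cmod (G p p) \<le> 1 / \<bar>Im z\<bar>"
    using G p by (intro shifted_hermitian_solution_bound[OF herm A z p])
      (auto simp: two_sided_inverse_def)
  then show ?thesis by (simp add: mat_inv_eq[OF G])
qed

lemma Gdiag_bound:
  assumes z: "Im z \<noteq> 0" and t: "1 \<le> t" "t \<le> N"
  shows "cmod (Gdiag B M N z t \<omega>) \<le> 1 / \<bar>Im z\<bar>"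
proof -
  define X where "X = (\<lambda>k s. Xentry B M N k s \<omega>)"
  define R where "R i j = (if i = j then z else 0) - Hmat N X z i j" for i j
  have herm: "cnj (R i j) = R j i" for i j
    by (cases "i < N"; cases "j < N") (auto simp: R_def Hmat_def)
  have A: "Hmat N X z i j = (if i = j then z else 0) - R i j" for i j
    by (simp add: R_def)
  have "cmod (mat_inv (2 * N) (Hmat N X z) (t - 1) (t - 1)) \<le> 1 / \<bar>Im z\<bar>"
    using t by (intro shifted_hermitian_mat_inv_diag_bound[OF herm A z]) auto
  then show ?thesis unfolding Gdiag_def X_def .
qed

lemma prob_space_integral_norm_bound:
  fixes f :: "'a \<Rightarrow> 'b::{banach, second_countable_topology}"
  assumes P: "prob_space P" and bound: "\<And>x. norm (f x) \<le> C"
  shows "norm (integral\<^sup>L P f) \<le> C"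
proof (cases "integrable P f")
  case True
  interpret prob_space P by (rule P)
  have "norm (integral\<^sup>L P f) \<le> (\<integral>x. norm (f x) \<partial>P)"
    by (rule integral_norm_bound)
  also have "\<dots> \<le> C"
    using True bound by (intro integral_le_const) auto
  finally show ?thesis .
next
  case False
  have "0 \<le> C"
    using bound[of undefined] norm_ge_zero order_trans by blast
  with False show ?thesis
    by (simp add: not_integrable_integral_eq)
qed

lemma measure_density_Icc:
  fixes w :: "real \<Rightarrow> real"
  assumes cont: "continuous_on UNIV w" and nonneg: "\<And>x. 0 \<le> w x"
  shows "measure (density lborel (\<lambda>x. ennreal (w x))) {a..b} = (LINT x:{a..b}|lborel. w x)"
proof -
  have w_meas: "w \<in> borel_measurable lborel"
    using borel_measurable_continuous_onI[OF cont] by simp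
  have int: "integrable lborel (\<lambda>x. indicator {a..b} x *\<^sub>R w x)"
    using borel_integrable_atLeastAtMost'[OF continuous_on_subset[OF cont]]
    unfolding set_integrable_def by simp
  have "emeasure (density lborel (\<lambda>x. ennreal (w x))) {a..b}
        = (\<integral>\<^sup>+x. ennreal (indicator {a..b} x *\<^sub>R w x) \<partial>lborel)"
    using w_meas by (subst emeasure_density) (auto intro!: nn_integral_cong split: split_indicator)
  also have "\<dots> = ennreal (LINT x:{a..b}|lborel. w x)"
    unfolding set_lebesgue_integral_def
    using int nonneg by (intro nn_integral_eq_integral) (auto split: split_indicator)
  moreover have "0 \<le> (LINT x:{a..b}|lborel. w x)"
    unfolding set_lebesgue_integral_def
    using nonneg by (intro Bochner_Integration.integral_nonneg) (simp add: indicator_def)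
  ultimately show ?thesis
    by (simp add: measure_def)
qed

lemma set_integral_density_real:
  fixes f :: "'a \<Rightarrow> 'b::{banach, second_countable_topology}"
  assumes f: "set_borel_measurable M A f"
    and w: "w \<in> borel_measurable M" and nonneg: "\<And>x. 0 \<le> w x"
  shows "(LINT x:A|density M (\<lambda>x. ennreal (w x)). f x) = (LINT x:A|M. w x *\<^sub>R f x)"
  using f unfolding set_lebesgue_integral_def set_borel_measurable_def
  by (subst integral_density[OF _ w]) (auto simp: nonneg ac_simps)

lemma interval_integral_error:
  fixes w :: "real \<Rightarrow> real"
  assumes cont: "continuous_on {a..b} w" and ab: "a \<le> b"
    and close: "\<And>x. x \<in> {a..b} \<Longrightarrow> \<bar>w x - w b\<bar> \<le> e"
  shows "\<bar>(LINT x:{a..b}|lborel. w x) - (b - a) * w b\<bar> \<le> e * (b - a)"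
proof -
  have int: "set_integrable lborel {a..b} f" if "continuous_on {a..b} f" for f :: "real \<Rightarrow> real"
    using borel_integrable_atLeastAtMost'[OF that] .
  have const: "(LINT x:{a..b}|lborel. c) = (b - a) * c" for c :: real
    using ab by (subst set_integral_const) auto
  have "(LINT x:{a..b}|lborel. w x) - (b - a) * w b = (LINT x:{a..b}|lborel. w x - w b)"
    using set_integral_diff(2)[OF int[OF cont] int[of "\<lambda>_. w b"]] by (simp add: const)
  also have "\<bar>\<dots>\<bar> \<le> (LINT x:{a..b}|lborel. \<bar>w x - w b\<bar>)"
    using set_integral_norm_bound[OF int] cont by (simp add: continuous_intros)
  also have "\<dots> \<le> (LINT x:{a..b}|lborel. e)"
    using cont close by (intro set_integral_mono int continuous_intros) auto
  also have "\<dots> = e * (b - a)"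
    by (simp add: const)
  finally show ?thesis .
qed

text \<open>Uniform Riemann approximation of the cells  [(t-1)/m, t/m]  of [0,1]: once the mesh 1/m
  is below a modulus of uniform continuity of w, each cell integral is w(t/m)/m up to e/m.\<close>
lemma cell_integral_uniform_approx:
  fixes w :: "real \<Rightarrow> real"
  assumes cont: "continuous_on {0..1} w" and e: "0 < e"
  shows "\<exists>d>0. \<forall>m::nat. 1/d < real m \<longrightarrow> (\<forall>t\<in>{1..m}.
           \<bar>(LINT x:{(real t - 1) / m .. real t / m}|lborel. w x) - w (real t / m) / m\<bar> \<le> e / m)"
proof -
  obtain d where d: "0 < d"
    and uc: "\<And>x x'. x \<in> {0..1} \<Longrightarrow> x' \<in> {0..1} \<Longrightarrow> dist x' x < d \<Longrightarrow> dist (w x') (w x) < e"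
    using uniformly_continuous_onE[OF compact_uniformly_continuous[OF cont compact_Icc] e] by blast
  have "\<bar>(LINT x:{(real t - 1) / m .. real t / m}|lborel. w x) - w (real t / m) / m\<bar> \<le> e / m"
    if mesh: "1/d < real m" and t: "t \<in> {1..m}" for m t
  proof -
    define a b where "a = (real t - 1) / m" and "b = real t / m"
    have "1 < d * real m"
      using mesh d by (simp add: field_simps)
    then have m: "0 < real m" "1 / real m < d"
      using d zero_less_mult_pos[of d "real m"] by (auto simp: field_simps)
    have ab: "a \<le> b" "b - a = 1 / m" "0 \<le> a" "b \<le> 1"
      using t m unfolding a_def b_def by (auto simp: divide_simps)
    have "\<bar>w x - w b\<bar> \<le> e" if "x \<in> {a..b}" for x
      using uc[of b x] that ab m by (auto simp: dist_real_def)
    with interval_integral_error[OF continuous_on_subset[OF cont] ab(1)] ab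
    have "\<bar>(LINT x:{a..b}|lborel. w x) - (b - a) * w b\<bar> \<le> e * (b - a)"
      by auto
    then show ?thesis
      using ab(2) by (simp add: a_def b_def)
  qed
  with d show ?thesis by blast
qed

lemma riemann_sum_transfer:
  fixes w :: "real \<Rightarrow> real" and c :: "nat \<Rightarrow> nat \<Rightarrow> 'b::real_normed_vector" and N :: "nat \<Rightarrow> nat"
  assumes cont: "continuous_on {0..1} w"
    and bounded: "\<And>n t. 1 \<le> t \<Longrightarrow> t \<le> N n \<Longrightarrow> norm (c n t) \<le> C"
    and N: "filterlim N at_top sequentially"
    and lim: "(\<lambda>n. (1 / real (N n)) *\<^sub>R (\<Sum>t = 1..N n. w (real t / real (N n)) *\<^sub>R c n t)) \<longlonglongrightarrow> L"
  shows "(\<lambda>n. \<Sum>t = 1..N n. (LINT x:{(real t - 1) / real (N n) .. real t / real (N n)}|lborel. w x)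
                              *\<^sub>R c n t) \<longlonglongrightarrow> L"
proof -
  define I where "I n t = (LINT x:{(real t - 1) / real (N n) .. real t / real (N n)}|lborel. w x)" for n t
  define D where "D n = (\<Sum>t = 1..N n. (I n t - w (real t / real (N n)) / real (N n)) *\<^sub>R c n t)" for n
  have "D \<longlonglongrightarrow> 0"
  proof (rule tendstoI)
    fix e :: real assume e: "0 < e"
    define e' where "e' = e / (\<bar>C\<bar> + 1)"
    have e': "0 < e'" "e' * \<bar>C\<bar> < e"
      using e by (auto simp: e'_def field_simps)
    obtain d where d: "0 < d" and cell: "\<And>m t. 1/d < real m \<Longrightarrow> t \<in> {1..m} \<Longrightarrow>
        \<bar>(LINT x:{(real t - 1) / m .. real t / m}|lborel. w x) - w (real t / m) / m\<bar> \<le> e' / m"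
      using cell_integral_uniform_approx[OF cont e'(1)] by blast
    have "eventually (\<lambda>n. 1/d < real (N n)) sequentially"
      using filterlim_compose[OF filterlim_real_sequentially N] by (simp add: filterlim_at_top_dense)
    then show "eventually (\<lambda>n. dist (D n) 0 < e) sequentially"
    proof eventually_elim
      fix n assume mesh: "1/d < real (N n)"
      then have pos: "0 < real (N n)"
        using d by (metis less_trans zero_less_divide_1_iff)
      have "norm (D n) \<le> (\<Sum>t = 1..N n. e' / real (N n) * \<bar>C\<bar>)"
        unfolding D_def
      proof (rule sum_norm_le)
        fix t assume t: "t \<in> {1..N n}"
        have "norm (c n t) \<le> \<bar>C\<bar>"
          using bounded[of t n] t by auto
        then show "norm ((I n t - w (real t / real (N n)) / real (N n)) *\<^sub>R c n t) \<le> e' / real (N n) * \<bar>C\<bar>"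
          using cell[OF mesh t] e'(1) pos unfolding norm_scaleR I_def
          by (intro mult_mono) auto
      qed
      also have "\<dots> = e' * \<bar>C\<bar>"
        using pos by simp
      finally show "dist (D n) 0 < e"
        using e' by simp
    qed
  qed
  then have "(\<lambda>n. D n + (1 / real (N n)) *\<^sub>R (\<Sum>t = 1..N n. w (real t / real (N n)) *\<^sub>R c n t))
             \<longlonglongrightarrow> 0 + L"
    by (intro tendsto_add lim)
  then show ?thesis
    by (simp add: D_def I_def scaleR_sum_right scaleR_diff_left sum.distrib[symmetric])
qed

text \<open>Pointwise convergence on the whole sample space implies convergence in probability.  No
  measurability of Y or Z is needed: a non-measurable exceptional set has measure 0 by convention.\<close>
lemma conv_in_prob_pointwise:
  assumes P: "prob_space P"
    and lim: "\<And>\<omega>. \<omega> \<in> space P \<Longrightarrow> (\<lambda>n. Y n \<omega>) \<longlonglongrightarrow> Z \<omega>"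
  shows "conv_in_prob P Y Z"
  unfolding conv_in_prob_def
proof (intro allI impI)
  interpret prob_space P by (rule P)
  fix e :: real assume e: "0 < e"
  define A where "A n = {\<omega> \<in> space P. dist (Y n \<omega>) (Z \<omega>) > e}" for n
  define f where "f n = (if A n \<in> sets P then indicator (A n) else (\<lambda>_. 0 :: real))" for n
  have measure_A: "measure P (A n) = integral\<^sup>L P (f n)" for n
    by (cases "A n \<in> sets P") (auto simp: f_def measure_notin_sets)
  have "(\<lambda>n. integral\<^sup>L P (f n)) \<longlonglongrightarrow> integral\<^sup>L P (\<lambda>_. 0 :: real)"
  proof (rule integral_dominated_convergence[where w = "\<lambda>_. 1"])
    show "AE x in P. (\<lambda>n. f n x) \<longlonglongrightarrow> 0"
    proof (rule AE_I2)
      fix x assume x: "x \<in> space P"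
      have "eventually (\<lambda>n. dist (Y n x) (Z x) < e) sequentially"
        using tendstoD[OF lim[OF x] e] .
      then have "eventually (\<lambda>n. f n x = 0) sequentially"
        by eventually_elim (auto simp: f_def A_def indicator_def)
      then show "(\<lambda>n. f n x) \<longlonglongrightarrow> 0"
        by (rule tendsto_eventually)
    qed
  qed (auto simp: f_def indicator_def)
  then show "(\<lambda>n. measure P {\<omega> \<in> space P. dist (Y n \<omega>) (Z \<omega>) > e}) \<longlonglongrightarrow> 0"
    unfolding A_def[symmetric] measure_A by simp
qed

theorem mainTheorem14:
  fixes P :: "'a measure" and tau gamma2 eps :: real and z :: complex and k :: nat
    and mu :: "nat \<Rightarrow> (real \<times> real) set \<Rightarrow> 'a \<Rightarrow> real"
    and om :: "nat \<Rightarrow> real \<Rightarrow> real \<Rightarrow> 'a \<Rightarrow> real"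
    and M :: "nat \<Rightarrow> 'a \<Rightarrow> real measure"
    and B :: "nat \<Rightarrow> real \<Rightarrow> 'a \<Rightarrow> real"
    and s :: "nat \<Rightarrow> nat" and K :: "real \<Rightarrow> complex"
  assumes "prob_space P" and "tau > 0" and "0 \<le> gamma2" and "gamma2 < 2"
    and "\<forall>j. gaussian_scattered P gamma2 (mu j)"
    and "\<forall>j e t. e > 0 \<longrightarrow> om j e t \<in> borel_measurable P \<and>
                 (AE \<omega> in P. om j e t \<omega> = mu j (A_eps tau e t) \<omega>)"
    and "\<forall>j e \<omega>. e > 0 \<longrightarrow> \<omega> \<in> space P \<longrightarrow> continuous_on UNIV (\<lambda>t. om j e t \<omega>)"
    and "\<forall>j. AE \<omega> in P. sets (M j \<omega>) = sets borel \<and> (\<forall>a b. emeasure (M j \<omega>) {a..b} < \<infinity>)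
                 \<and> vague_conv (\<lambda>e. Meps (om j e) \<omega>) (M j \<omega>)"
    and "\<forall>j u. (\<lambda>\<omega>. measure (M j \<omega>) {0..u}) \<in> borel_measurable P"
    and "\<forall>j. std_BM P (B j)"
    and "prob_space.indep_sets P
           (\<lambda>i. case i of Inl j \<Rightarrow> gen_sigma P (mu j) adm | Inr j \<Rightarrow> gen_sigma P (B j) {0..}) UNIV"
    and "Im z \<noteq> 0" and "0 < eps" and "eps < tau"
    and "strict_mono s"
    and "set_borel_measurable borel {0..1} K" and "bounded (K ` {0..1})"
    and "\<forall>f :: real \<Rightarrow> real. continuous_on {0..1} f \<longrightarrow>
           (\<lambda>n. (1 / real (s n)) *\<^sub>R
                 (\<Sum>t = 1..s n. f (real t / real (s n)) *\<^sub>R integral\<^sup>L P (Gdiag B M (s n) z t)))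
           \<longlonglongrightarrow> (LINT x:{0..1}|lborel. f x *\<^sub>R K x)"
  shows "conv_in_prob P
           (\<lambda>n \<omega>. \<Sum>t = 1..s n.
               measure (Meps (om k eps) \<omega>) {(real t - 1) / real (s n) .. real t / real (s n)}
                 *\<^sub>R integral\<^sup>L P (Gdiag B M (s n) z t))
           (\<lambda>\<omega>. LINT x:{0..1}|Meps (om k eps) \<omega>. K x)"
proof (rule conv_in_prob_pointwise[OF assms(1)])
  fix \<omega> assume \<omega>: "\<omega> \<in> space P"
  define w where "w t = exp (om k eps t \<omega>)" for t
  have w_cont: "continuous_on UNIV w"
    using assms(7,13) \<omega> unfolding w_def by (auto intro: continuous_on_exp)
  have w_nonneg: "0 \<le> w t" for t
    by (simp add: w_def)
  have Meps_w: "Meps (om k eps) \<omega> = density lborel (\<lambda>t. ennreal (w t))"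
    unfolding Meps_def w_def ..
  have bounded: "norm (integral\<^sup>L P (Gdiag B M (s n) z t)) \<le> 1 / \<bar>Im z\<bar>" if "1 \<le> t" "t \<le> s n" for n t
    using prob_space_integral_norm_bound[OF assms(1) Gdiag_bound[OF assms(12) that]] .
  have limit: "(LINT x:{0..1}|Meps (om k eps) \<omega>. K x) = (LINT x:{0..1}|lborel. w x *\<^sub>R K x)"
    using assms(16) w_cont unfolding Meps_w
    by (intro set_integral_density_real)
      (auto simp: w_def set_borel_measurable_def borel_measurable_continuous_onI)
  show "(\<lambda>n. \<Sum>t = 1..s n. measure (Meps (om k eps) \<omega>) {(real t - 1) / real (s n) .. real t / real (s n)}
                 *\<^sub>R integral\<^sup>L P (Gdiag B M (s n) z t)) \<longlonglongrightarrow> (LINT x:{0..1}|Meps (om k eps) \<omega>. K x)"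
    unfolding limit
    unfolding Meps_w measure_density_Icc[OF w_cont w_nonneg]
    using assms(18) continuous_on_subset[OF w_cont]
    by (intro riemann_sum_transfer[OF _ bounded filterlim_subseq[OF assms(15)]]) auto
qed

end
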